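(* Let $P\ge3$ be an integer and $\alpha=a/q$ with $q$ a positive integer and $\gcd(a,q)=1$. Let $k$ be a positive integer with $g=\gcd(k,q)\le4$. Then for every positive integer $Q$, every real number $\beta$ and every $\varepsilon$ with $0<\varepsilon\le1$, $$\sum_{x=0}^{Q-1}\min\Big(P,\frac{1}{2\|k\alpha x+\beta\|}\Big)\le\Big(1+\frac{gQ}{q}\Big)(P+q)\frac{2P^{\varepsilon}}{\varepsilon}.$$
   Context: For a real number $t$, $\|t\|=\min_{n\in\mathbb{Z}}|t-n|$ is the distance from $t$ to the nearest integer; when $\|t\|=0$ the minimum $\min(P,1/(2\|t\|))$ is taken to be $P$. *)

theory Defs
  imports Complex_Main
begin

definition dist_int :: "real \<Rightarrow> real" where
  "dist_int t = \<bar>t - of_int (round t)\<bar>"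

definition minrec :: "real \<Rightarrow> real \<Rightarrow> real" where
  "minrec P t = (if dist_int t = 0 then P else min P (1 / (2 * dist_int t)))"

end

theory Submission
  imports Defs "HOL-Analysis.Convex"
begin

(* Write k a/q = a'/n in lowest terms, with n = q/gcd(k,q). Putting \<beta> n = b + t with b an
   integer and 0 <= t < 1, the x-th point is ((a'x + b) mod n + t)/n modulo 1, and since a' is
   invertible mod n each residue is hit by at most ceil(Q/n) <= 1 + gcd(k,q) Q/q of the x < Q.
   For a complete set of residues s < n the point (s + t)/n has distance at least
   min(s, n-1-s)/n from the integers, so the complete sum is at most
   2P + 2 sum_(1 <= s < n) min(P, n/(2s)); finally min(P, y) <= P^e y^(1-e) and
   sum_(s <= n) s^(e-1) <= n^e/e bound this by 2P + 2 P^e n/e <= (P + q) 2 P^e/e. *)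

lemma dist_int_add_of_int [simp]: "dist_int (t + of_int n) = dist_int t"
proof -
  have "\<bar>t + of_int n - of_int (round (t + of_int n))\<bar> \<le> \<bar>t + of_int n - of_int (round t + n)\<bar>"
    by (rule round_diff_minimal)
  moreover have "\<bar>t - of_int (round t)\<bar> \<le> \<bar>t - of_int (round (t + of_int n) - n)\<bar>"
    by (rule round_diff_minimal)
  ultimately show ?thesis
    unfolding dist_int_def by (simp add: algebra_simps)
qed

lemma minrec_add_of_int [simp]: "minrec P (t + of_int n) = minrec P t"
  by (simp add: minrec_def)

lemma minrec_le: "minrec P t \<le> P"
  by (simp add: minrec_def)

lemma minrec_nonneg: "0 \<le> P \<Longrightarrow> 0 \<le> minrec P t"
  by (simp add: minrec_def dist_int_def)

lemma minrec_le_if_dist_ge: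
  assumes "0 < c" and "\<And>m::int. c \<le> \<bar>t - of_int m\<bar>"
  shows "minrec P t \<le> min P (1 / (2 * c))"
proof -
  have "c \<le> dist_int t"
    unfolding dist_int_def by (rule assms(2))
  with assms(1) have "1 / (2 * dist_int t) \<le> 1 / (2 * c)"
    by (simp add: frac_le)
  with \<open>c \<le> dist_int t\<close> assms(1) show ?thesis
    unfolding minrec_def by auto
qed

lemma sum_powr_le:
  fixes e :: real
  assumes "0 < e" and "e \<le> 1"
  shows "(\<Sum>j=1..n. real j powr (e - 1)) \<le> real n powr e / e"
proof (induction n)
  case 0
  then show ?case by simp
next
  case (Suc n)
  have step: "real n powr e + e * real (Suc n) powr (e - 1) \<le> real (Suc n) powr e"
  proof (cases "n = 0")
    case False
    have "real n powr e = real n powr e * real (Suc n) powr (1 - e) * real (Suc n) powr (e - 1)"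
      by (simp add: mult.assoc flip: powr_add)
    also have "\<dots> \<le> (e * real n + (1 - e) * real (Suc n)) * real (Suc n) powr (e - 1)"
      using False assms by (intro mult_right_mono Youngs_inequality_0) auto
    also have "\<dots> = real (Suc n) * real (Suc n) powr (e - 1) - e * real (Suc n) powr (e - 1)"
      by (simp add: algebra_simps)
    also have "real (Suc n) * real (Suc n) powr (e - 1) = real (Suc n) powr e"
      using powr_mult_base[of "real (Suc n)" "e - 1"] by simp
    finally show ?thesis by simp
  qed (use assms in simp)
  have "(\<Sum>j=1..Suc n. real j powr (e - 1)) \<le> real n powr e / e + real (Suc n) powr (e - 1)"
    using Suc.IH by simp
  also have "\<dots> = (real n powr e + e * real (Suc n) powr (e - 1)) / e"
    using assms by (simp add: field_simps)
  also have "\<dots> \<le> real (Suc n) powr e / e"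
    using step assms by (simp add: divide_right_mono)
  finally show ?case .
qed

lemma min_le_powr_mult_powr:
  fixes P y e :: real
  assumes "0 < P" and "0 < y" and "0 < e" and "e \<le> 1"
  shows "min P y \<le> P powr e * y powr (1 - e)"
proof (cases "y \<le> P")
  case True
  have "min P y = y powr e * y powr (1 - e)"
    using True assms by (simp flip: powr_add)
  also have "\<dots> \<le> P powr e * y powr (1 - e)"
    using True assms by (intro mult_right_mono powr_mono2) auto
  finally show ?thesis .
next
  case False
  have "min P y = P powr e * P powr (1 - e)"
    using False assms by (simp flip: powr_add)
  also have "\<dots> \<le> P powr e * y powr (1 - e)"
    using False assms by (intro mult_left_mono powr_mono2) auto
  finally show ?thesis .
qed

lemma sum_min_divide_le:
  fixes P e :: real
  assumes "0 < P" and "0 < e" and "e \<le> 1"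
  shows "(\<Sum>s=1..<n. min P (real n / (2 * real s))) \<le> P powr e * real n / e"
proof -
  have "min P (real n / (2 * real s)) \<le> P powr e * real n powr (1 - e) * real s powr (e - 1)"
    if "s \<in> {1..<n}" for s
  proof -
    from that have s: "1 \<le> s" "s < n" by auto
    have "min P (real n / (2 * real s)) \<le> min P (real n / real s)"
      using s by (intro min.mono) (auto simp: divide_left_mono)
    also have "\<dots> \<le> P powr e * (real n / real s) powr (1 - e)"
      using s assms by (intro min_le_powr_mult_powr) auto
    also have "(real n / real s) powr (1 - e) = real n powr (1 - e) * real s powr (e - 1)"
      using s powr_minus[of "real s" "1 - e"] powr_divide[of "real n" "real s" "1 - e"]
      by (simp add: divide_inverse)
    finally show ?thesis by (simp add: mult.assoc)
  qed
  then have "(\<Sum>s=1..<n. min P (real n / (2 * real s)))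
      \<le> (\<Sum>s=1..n. P powr e * real n powr (1 - e) * real s powr (e - 1))"
    by (intro order.trans[OF sum_mono sum_mono2]) auto
  also have "\<dots> \<le> P powr e * real n powr (1 - e) * (real n powr e / e)"
    unfolding sum_distrib_left[symmetric] using assms by (intro mult_left_mono sum_powr_le) auto
  also have "\<dots> = P powr e * real n / e"
    by (cases "n = 0") (simp_all flip: powr_add)
  finally show ?thesis .
qed

lemma residue_dist_ge:
  fixes t :: real
  assumes "0 \<le> t" and "t < 1" and "s < n"
  shows "min (real s) (real (n - Suc s)) / real n \<le> \<bar>(real s + t) / real n - of_int m\<bar>"
proof (cases "m \<le> 0")
  case True
  have "real s / real n \<le> (real s + t) / real n"
    using assms by (simp add: divide_right_mono)
  with True show ?thesis
    by (simp add: min_divide_distrib_right)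
next
  case False
  have "real (n - Suc s) / real n \<le> 1 - (real s + t) / real n"
    using assms by (simp add: of_nat_diff field_simps)
  with False show ?thesis
    by (simp add: min_divide_distrib_right)
qed

lemma sum_minrec_residues_le:
  fixes P t e :: real
  assumes "0 < P" and "0 \<le> t" and "t < 1" and "0 < e" and "e \<le> 1"
  shows "(\<Sum>s<n. minrec P ((real s + t) / real n)) \<le> 2 * P + 2 * (P powr e * real n / e)"
proof -
  define h where "h s = (if s = 0 then P else min P (real n / (2 * real s)))" for s :: nat
  have h_nonneg: "0 \<le> h s" for s
    unfolding h_def using assms(1) by auto
  have term_le: "minrec P ((real s + t) / real n) \<le> h s + h (n - Suc s)" if "s < n" for s
  proof (cases "s = 0 \<or> n - Suc s = 0")
    case True
    then have "P \<le> h s + h (n - Suc s)"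
      using h_nonneg[of s] h_nonneg[of "n - Suc s"] unfolding h_def by auto
    then show ?thesis
      using minrec_le order_trans by blast
  next
    case False
    define c where "c = min (real s) (real (n - Suc s)) / real n"
    have "0 < c"
      using False that unfolding c_def by auto
    then have "minrec P ((real s + t) / real n) \<le> min P (1 / (2 * c))"
      using residue_dist_ge[OF assms(2,3) that] unfolding c_def by (rule minrec_le_if_dist_ge)
    also have "\<dots> \<le> h s + h (n - Suc s)"
      using False h_nonneg[of s] h_nonneg[of "n - Suc s"]
      unfolding c_def h_def min_def by auto
    finally show ?thesis .
  qed
  have "(\<Sum>s<n. minrec P ((real s + t) / real n)) \<le> (\<Sum>s<n. h s + h (n - Suc s))"
    using term_le by (intro sum_mono) auto
  also have "\<dots> = 2 * (\<Sum>s<n. h s)"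
    by (simp add: sum.distrib sum.nat_diff_reindex)
  also have "(\<Sum>s<n. h s) \<le> (\<Sum>s\<in>insert 0 {1..<n}. h s)"
    using h_nonneg by (intro sum_mono2) auto
  also have "\<dots> = P + (\<Sum>s=1..<n. min P (real n / (2 * real s)))"
    unfolding h_def by simp
  also have "\<dots> \<le> P + P powr e * real n / e"
    using assms by (intro add_left_mono sum_min_divide_le) auto
  finally show ?thesis
    by simp
qed

lemma card_affine_mod_fiber_le:
  fixes a b :: int and n Q y :: nat
  assumes "0 < n" and "coprime a (int n)"
  shows "card {x \<in> {..<Q}. nat ((a * int x + b) mod int n) = y} \<le> (Q + n - 1) div n"
proof -
  let ?F = "{x \<in> {..<Q}. nat ((a * int x + b) mod int n) = y}"
  \<comment> \<open>Two points of a fibre are congruent mod n, so they lie in different blocks of length n.\<close>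
  have "inj_on (\<lambda>x. x div n) ?F"
  proof (rule inj_onI)
    fix x x' assume "x \<in> ?F" "x' \<in> ?F" and same_block: "x div n = x' div n"
    then have "nat ((a * int x + b) mod int n) = nat ((a * int x' + b) mod int n)"
      by simp
    then have "(a * int x + b) mod int n = (a * int x' + b) mod int n"
      using assms(1) by (simp add: eq_nat_nat_iff)
    then have "int n dvd a * (int x - int x')"
      by (simp add: mod_eq_dvd_iff algebra_simps)
    then have "int n dvd int x - int x'"
      using assms(2) by (simp add: coprime_dvd_mult_right_iff coprime_commute)
    then have "int (x mod n) = int (x' mod n)"
      by (simp add: zmod_int mod_eq_dvd_iff)
    then have same_residue: "x mod n = x' mod n"
      by simp
    have "x = x div n * n + x mod n"
      by simp
    also have "\<dots> = x'"
      using same_block same_residue by simp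
    finally show "x = x'" .
  qed
  moreover have "(\<lambda>x. x div n) ` ?F \<subseteq> {..<(Q + n - 1) div n}"
  proof clarify
    fix x assume "x < Q"
    then have "(x + n) div n \<le> (Q + n - 1) div n"
      by (intro div_le_mono) simp
    with assms(1) show "x div n < (Q + n - 1) div n"
      by simp
  qed
  ultimately have "card ?F \<le> card {..<(Q + n - 1) div n}"
    by (intro card_inj_on_le) auto
  then show ?thesis
    by simp
qed

lemma sum_affine_mod_le:
  fixes a b :: int and n Q :: nat and f :: "nat \<Rightarrow> real"
  assumes "0 < n" and "coprime a (int n)" and "\<And>y. 0 \<le> f y"
  shows "(\<Sum>x<Q. f (nat ((a * int x + b) mod int n)))
    \<le> real ((Q + n - 1) div n) * (\<Sum>y<n. f y)"
proof -
  let ?r = "\<lambda>x. nat ((a * int x + b) mod int n)"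
  have "(\<Sum>x<Q. f (?r x)) = (\<Sum>y<n. \<Sum>x \<in> {x \<in> {..<Q}. ?r x = y}. f (?r x))"
    by (rule sum.group[symmetric]) (use assms(1) in \<open>auto simp: nat_less_iff\<close>)
  also have "\<dots> = (\<Sum>y<n. real (card {x \<in> {..<Q}. ?r x = y}) * f y)"
    by (rule sum.cong) auto
  also have "\<dots> \<le> (\<Sum>y<n. real ((Q + n - 1) div n) * f y)"
    using assms card_affine_mod_fiber_le by (intro sum_mono mult_right_mono) auto
  also have "\<dots> = real ((Q + n - 1) div n) * (\<Sum>y<n. f y)"
    by (simp add: sum_distrib_left)
  finally show ?thesis .
qed

lemma sum_minrec_rational_le:
  fixes a :: int and n Q :: nat and P \<beta> e :: real
  assumes "0 < n" and "coprime a (int n)" and "0 < P" and "0 < e" and "e \<le> 1"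
  shows "(\<Sum>x<Q. minrec P (of_int a / real n * real x + \<beta>))
    \<le> real ((Q + n - 1) div n) * (2 * P + 2 * (P powr e * real n / e))"
proof -
  define b where "b = \<lfloor>\<beta> * real n\<rfloor>"
  define t where "t = \<beta> * real n - of_int b"
  have t: "0 \<le> t" "t < 1"
    unfolding t_def b_def by linarith+
  have "minrec P (of_int a / real n * real x + \<beta>)
      = minrec P ((real (nat ((a * int x + b) mod int n)) + t) / real n)" for x
  proof -
    define z where "z = a * int x + b"
    have "of_int z = real n * of_int (z div int n) + of_int (z mod int n)"
      by (metis of_int_add of_int_mult of_int_of_nat_eq div_mult_mod_eq mult.commute)
    moreover have "real (nat (z mod int n)) = of_int (z mod int n)"
      using assms(1) by simp
    ultimately have "of_int a / real n * real x + \<beta>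
        = (real (nat (z mod int n)) + t) / real n + of_int (z div int n)"
      using assms(1) unfolding z_def t_def by (simp add: field_simps)
    then show ?thesis
      unfolding z_def by simp
  qed
  then have "(\<Sum>x<Q. minrec P (of_int a / real n * real x + \<beta>))
      = (\<Sum>x<Q. minrec P ((real (nat ((a * int x + b) mod int n)) + t) / real n))"
    by simp
  also have "\<dots> \<le> real ((Q + n - 1) div n) * (\<Sum>s<n. minrec P ((real s + t) / real n))"
    using assms by (intro sum_affine_mod_le minrec_nonneg) auto
  also have "\<dots> \<le> real ((Q + n - 1) div n) * (2 * P + 2 * (P powr e * real n / e))"
    using assms t by (intro mult_left_mono sum_minrec_residues_le) auto
  finally show ?thesis .
qed

lemma reduce_multiple_fraction:
  fixes a :: int and k q :: nat
  assumes "0 < q" and "coprime a (int q)"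
  obtains a' :: int and n :: nat
  where "q = gcd k q * n" and "coprime a' (int n)"
    and "real k * (of_int a / real q) = of_int a' / real n"
proof
  define g where "g = gcd k q"
  show q: "q = gcd k q * (q div g)"
    unfolding g_def by simp
  have "coprime (k div g) (q div g)"
    unfolding g_def using assms(1) by (intro div_gcd_coprime) auto
  moreover have "coprime a (int (q div g))"
    using assms(2) q unfolding g_def by (metis coprime_mult_right_iff of_nat_mult)
  ultimately show "coprime (int (k div g) * a) (int (q div g))"
    by (simp add: coprime_mult_left_iff)
  have "real k = real g * real (k div g)" "real q = real g * real (q div g)"
    unfolding g_def by (simp_all flip: of_nat_mult)
  moreover have "0 < g"
    unfolding g_def using assms(1) by simp
  ultimately show "real k * (of_int a / real q) = of_int (int (k div g) * a) / real (q div g)"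
    by (simp add: field_simps)
qed

lemma of_nat_div_round_up_le:
  assumes "0 < n"
  shows "real ((Q + n - 1) div n) \<le> 1 + real Q / real n"
proof -
  have "real ((Q + n - 1) div n) \<le> real (Q + n - 1) / real n"
    by (rule of_nat_div_le_of_nat)
  also have "\<dots> \<le> 1 + real Q / real n"
    using assms by (simp add: field_simps)
  finally show ?thesis .
qed

lemma double_add_powr_divide_le:
  fixes p e :: real and n q :: nat
  assumes "1 \<le> p" and "0 < e" and "e \<le> 1" and "n \<le> q"
  shows "2 * p + 2 * (p powr e * real n / e) \<le> (p + real q) * (2 * p powr e / e)"
proof -
  have "1 \<le> p powr e"
    using assms(1,2) by (intro ge_one_powr_ge_zero) auto
  with assms(2,3) have "2 \<le> 2 * p powr e / e"
    by (simp add: le_divide_eq)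
  then have "p * 2 \<le> p * (2 * p powr e / e)"
    using assms(1) by (intro mult_left_mono) auto
  moreover have "2 * (p powr e * real n / e) = real n * (2 * p powr e / e)"
    by simp
  moreover have "\<dots> \<le> real q * (2 * p powr e / e)"
    using assms(2,4) by (intro mult_right_mono) auto
  ultimately show ?thesis
    unfolding distrib_right by linarith
qed

theorem lemma10:
  fixes P :: int and a :: int and q :: nat and k :: nat and Q :: nat
    and \<beta> \<epsilon> :: real
  assumes "P \<ge> 3" and "q > 0" and "coprime a (int q)"
    and "k > 0" and "gcd k q \<le> 4"
    and "Q > 0" and "0 < \<epsilon>" and "\<epsilon> \<le> 1"
  shows "(\<Sum>x<Q. minrec (real_of_int P)
            (real k * (real_of_int a / real q) * real x + \<beta>))
         \<le> (1 + real (gcd k q) * real Q / real q) * (real_of_int P + real q)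
            * (2 * real_of_int P powr \<epsilon> / \<epsilon>)"
proof -
  obtain a' n where q: "q = gcd k q * n" and "coprime a' (int n)"
    and k_alpha: "real k * (of_int a / real q) = of_int a' / real n"
    using reduce_multiple_fraction[OF assms(2,3)] .
  have "0 < n" "n \<le> q"
    using assms(2) q by (metis gr0I mult_0_right, metis dvd_imp_le dvd_triv_right)
  have "(\<Sum>x<Q. minrec (real_of_int P) (real k * (real_of_int a / real q) * real x + \<beta>))
      \<le> real ((Q + n - 1) div n)
        * (2 * real_of_int P + 2 * (real_of_int P powr \<epsilon> * real n / \<epsilon>))"
    unfolding k_alpha using \<open>0 < n\<close> \<open>coprime a' (int n)\<close> assms
    by (intro sum_minrec_rational_le) auto
  also have "\<dots> \<le> (1 + real (gcd k q) * real Q / real q)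
      * ((real_of_int P + real q) * (2 * real_of_int P powr \<epsilon> / \<epsilon>))"
  proof (rule mult_mono)
    have "real q = real (gcd k q) * real n" "0 < gcd k q"
      using q assms(2) by (metis of_nat_mult, simp)
    then have "real Q / real n = real (gcd k q) * real Q / real q"
      by (simp add: field_simps)
    then show "real ((Q + n - 1) div n) \<le> 1 + real (gcd k q) * real Q / real q"
      using of_nat_div_round_up_le[OF \<open>0 < n\<close>, of Q] by simp
  qed (use assms \<open>n \<le> q\<close> double_add_powr_divide_le in auto)
  finally show ?thesis
    by (simp add: mult.assoc)
qed

end
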